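(* Let $B_R(0)\subset B_{2R}(0)\subset\mathbb{R}^n$ be concentric balls, with volumes $\|B_R(0)\|$ and $\|B_{2R}(0)\setminus B_R(0)\|$ of $B_R(0)$ and of the annulus, and let $\psi$ be harmonic on $B_{2R}(0)$ satisfying the Caccioppoli estimate $$\int_{B_R(0)}|\nabla_i\psi(x)|^2d^nx\le\frac{4}{R^2}\int_{B_{2R}(0)\setminus B_R(0)}|\psi(x)|^2d^nx .$$ Let $\mathbb{F}$ be a mean-square differentiable Gaussian random scalar field on $B_{2R}(0)$ with $\mathsf{E}[\mathbb{F}(x)]=0$, $\mathsf{E}[\mathbb{F}(x)\mathbb{F}(x)]=\alpha>0$ and $\mathsf{E}[\nabla_i\mathbb{F}(x)\nabla_j\mathbb{F}(x)]=\delta_{ij}\beta$, normalised so that $\mathsf{E}[|\nabla_i\mathbb{F}(x)|^2]=\beta$ after summation over $i$. For $\lambda>0$ put $\overline{\psi}=\psi+\lambda\mathbb{F}$. Then the stochastically averaged Caccioppoli estimate $$\mathsf{E}\Big[\int_{B_R(0)}|\nabla_i\overline{\psi}(x)|^2d^nx\Big]\le\frac{4}{R^2}\,\mathsf{E}\Big[\int_{B_{2R}(0)\setminus B_R(0)}|\overline{\psi}(x)|^2d^nx\Big]$$ holds if $$\frac{R^2}{4}\Big(\frac{\beta}{\alpha}\Big)\le\frac{\|B_{2R}(0)\setminus B_R(0)\|}{\|B_R(0)\|}.$$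
   Context: $(\Omega,\mathscr{F},\mathsf{P})$ is a probability space, $\mathsf{E}$ its expectation. A Gaussian random scalar field on a set $S$ is a family of jointly Gaussian real random variables $\mathbb{F}(x)$, $x\in S$; mean-square differentiability means $\nabla_i\mathbb{F}$ exists as a mean-square limit, and integrals of the field and its gradient exist and commute with expectation. $|\nabla_i u|^2=\sum_i(\partial_iu)^2$. *)

theory Defs
  imports "HOL-Probability.Probability"
begin

definition grad :: "('a::euclidean_space \<Rightarrow> real) \<Rightarrow> 'a \<Rightarrow> 'a" where
  "grad f x = (\<Sum>i\<in>Basis. frechet_derivative f (at x) i *\<^sub>R i)"

definition laplacian :: "('a::euclidean_space \<Rightarrow> real) \<Rightarrow> 'a \<Rightarrow> real" where
  "laplacian f x = (\<Sum>i\<in>Basis. frechet_derivative (grad f) (at x) i \<bullet> i)"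

definition harmonic_on :: "'a::euclidean_space set \<Rightarrow> ('a \<Rightarrow> real) \<Rightarrow> bool" where
  "harmonic_on S f \<longleftrightarrow> open S \<and>
     (\<forall>x\<in>S. f differentiable (at x)) \<and>
     (\<forall>x\<in>S. grad f differentiable (at x)) \<and>
     (\<forall>i\<in>Basis. \<forall>j\<in>Basis. continuous_on S (\<lambda>y. frechet_derivative (grad f) (at y) i \<bullet> j)) \<and>
     (\<forall>x\<in>S. laplacian f x = 0)"

text \<open>Gaussian random field on S: every finite linear combination of field values is
  normally distributed (possibly degenerate, i.e. almost surely constant).\<close>

definition gaussian_field :: "'w measure \<Rightarrow> 'a set \<Rightarrow> ('w \<Rightarrow> 'a \<Rightarrow> real) \<Rightarrow> bool" where
  "gaussian_field M S F \<longleftrightarrow>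
     (\<forall>I c. finite I \<and> I \<subseteq> S \<longrightarrow>
        (let Y = (\<lambda>\<omega>. \<Sum>x\<in>I. c x * F \<omega> x) in
          (\<exists>\<mu> \<sigma>. \<sigma> > 0 \<and> distributed M lborel Y (normal_density \<mu> \<sigma>)) \<or>
          (\<exists>a. AE \<omega> in M. Y \<omega> = a)))"

definition ms_gradient :: "'w measure \<Rightarrow> 'a::euclidean_space set \<Rightarrow> ('w \<Rightarrow> 'a \<Rightarrow> real) \<Rightarrow> ('w \<Rightarrow> 'a \<Rightarrow> 'a) \<Rightarrow> bool" where
  "ms_gradient M S F G \<longleftrightarrow>
     (\<forall>x\<in>S. integrable M (\<lambda>\<omega>. (F \<omega> x)\<^sup>2) \<and> (\<forall>i\<in>Basis. integrable M (\<lambda>\<omega>. (G \<omega> x \<bullet> i)\<^sup>2))) \<and>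
     (\<forall>x\<in>S. \<forall>i\<in>Basis.
        ((\<lambda>h. \<integral>\<omega>. ((F \<omega> (x + h *\<^sub>R i) - F \<omega> x) / h - G \<omega> x \<bullet> i)\<^sup>2 \<partial>M) \<longlongrightarrow> 0) (at 0))"

end

theory Submission
  imports Defs
begin

text \<open>
  Pointwise in x, adding \<lambda>F to \<psi> raises the expected integrands by constants:
  E (\<psi> + \<lambda>F)^2 = \<psi>^2 + \<lambda>^2 \<alpha> and E |\<nabla>\<psi> + \<lambda>\<nabla>F|^2 = |\<nabla>\<psi>|^2 + \<lambda>^2 \<beta>, because the cross
  terms vanish: F is centred, and hence so is its mean-square gradient, an L^2 limit of centred
  difference quotients. Exchanging expectation and integration (Tonelli), the averaged estimate
  becomes the deterministic Caccioppoli estimate plus \<lambda>^2 \<beta> |B_R| \<le> 4/R^2 \<lambda>^2 \<alpha> |B_2R - B_R|,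
  which is the volume condition.
\<close>

lemma (in prob_space) square_expectation_le:
  fixes X :: "'a \<Rightarrow> real"
  assumes "integrable M X" "integrable M (\<lambda>\<omega>. (X \<omega>)\<^sup>2)"
  shows "(expectation X)\<^sup>2 \<le> expectation (\<lambda>\<omega>. (X \<omega>)\<^sup>2)"
  using variance_positive[of X] variance_eq[OF assms] by simp

lemma integrable_square_diff:
  fixes f g :: "'a \<Rightarrow> real"
  assumes [measurable]: "f \<in> borel_measurable M" "g \<in> borel_measurable M"
    and "integrable M (\<lambda>x. (f x)\<^sup>2)" "integrable M (\<lambda>x. (g x)\<^sup>2)"
  shows "integrable M (\<lambda>x. (f x - g x)\<^sup>2)"
proof (rule Bochner_Integration.integrable_bound)
  show "integrable M (\<lambda>x. 2 * ((f x)\<^sup>2 + (g x)\<^sup>2))"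
    using assms by auto
  have "(a - b)\<^sup>2 \<le> 2 * (a\<^sup>2 + b\<^sup>2)" for a b :: real
    using zero_le_power2[of "a + b"] unfolding power2_eq_square by (simp add: algebra_simps)
  then show "AE x in M. norm ((f x - g x)\<^sup>2) \<le> norm (2 * ((f x)\<^sup>2 + (g x)\<^sup>2))"
    by simp
qed measurable

lemma (in prob_space) ms_gradient_integrable:
  fixes G :: "'a \<Rightarrow> 'b::euclidean_space \<Rightarrow> 'b"
  assumes "ms_gradient M S F G" "x \<in> S" "i \<in> Basis" "random_variable borel (\<lambda>\<omega>. G \<omega> x)"
  shows "integrable M (\<lambda>\<omega>. G \<omega> x \<bullet> i)" "integrable M (\<lambda>\<omega>. (G \<omega> x \<bullet> i)\<^sup>2)"
proof -
  show G_sq: "integrable M (\<lambda>\<omega>. (G \<omega> x \<bullet> i)\<^sup>2)"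
    using assms(1-3) by (simp add: ms_gradient_def)
  have "random_variable borel (\<lambda>\<omega>. G \<omega> x \<bullet> i)"
    using assms(4) by measurable
  then show "integrable M (\<lambda>\<omega>. G \<omega> x \<bullet> i)"
    using G_sq by (rule square_integrable_imp_integrable)
qed

lemma (in prob_space) ms_gradient_expectation_zero:
  fixes F :: "'a \<Rightarrow> 'b::euclidean_space \<Rightarrow> real" and G :: "'a \<Rightarrow> 'b \<Rightarrow> 'b"
  assumes "open S" "x \<in> S" "i \<in> Basis"
    and G_meas: "random_variable borel (\<lambda>\<omega>. G \<omega> x)"
    and msd: "ms_gradient M S F G"
    and centred: "\<And>y. y \<in> S \<Longrightarrow> integrable M (\<lambda>\<omega>. F \<omega> y) \<and> expectation (\<lambda>\<omega>. F \<omega> y) = 0"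
  shows "expectation (\<lambda>\<omega>. G \<omega> x \<bullet> i) = 0"
proof -
  define c where "c = expectation (\<lambda>\<omega>. G \<omega> x \<bullet> i)"
  define D where "D h \<omega> = (F \<omega> (x + h *\<^sub>R i) - F \<omega> x) / h - G \<omega> x \<bullet> i" for h \<omega>
  have lim: "((\<lambda>h. expectation (\<lambda>\<omega>. (D h \<omega>)\<^sup>2)) \<longlongrightarrow> 0) (at 0)"
    using msd \<open>x \<in> S\<close> \<open>i \<in> Basis\<close> unfolding ms_gradient_def D_def by blast
  have G_int: "integrable M (\<lambda>\<omega>. G \<omega> x \<bullet> i)" and G_sq: "integrable M (\<lambda>\<omega>. (G \<omega> x \<bullet> i)\<^sup>2)"
    using ms_gradient_integrable[OF msd \<open>x \<in> S\<close> \<open>i \<in> Basis\<close> G_meas] by auto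
  have "((\<lambda>h. x + h *\<^sub>R i) \<longlongrightarrow> x + 0 *\<^sub>R i) (at 0)"
    by (intro tendsto_intros)
  then have "\<forall>\<^sub>F h in at 0. x + h *\<^sub>R i \<in> S"
    using \<open>open S\<close> \<open>x \<in> S\<close> by (simp add: topological_tendstoD)
  \<comment> \<open>E D h = -c for every h, so c^2 is bounded by the mean-square error E (D h)^2, which tends to 0.\<close>
  then have "\<forall>\<^sub>F h in at 0. c\<^sup>2 \<le> expectation (\<lambda>\<omega>. (D h \<omega>)\<^sup>2)"
  proof eventually_elim
    case (elim h)
    define y where "y = x + h *\<^sub>R i"
    have F_int: "integrable M (\<lambda>\<omega>. F \<omega> z)" "expectation (\<lambda>\<omega>. F \<omega> z) = 0"
      and F_sq: "integrable M (\<lambda>\<omega>. (F \<omega> z)\<^sup>2)" if "z \<in> {x, y}" for z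
      using that centred msd \<open>x \<in> S\<close> elim unfolding ms_gradient_def y_def by auto
    have "integrable M (\<lambda>\<omega>. (F \<omega> y - F \<omega> x)\<^sup>2)"
      using F_int F_sq by (intro integrable_square_diff) auto
    then have "integrable M (\<lambda>\<omega>. ((F \<omega> y - F \<omega> x) / h)\<^sup>2)"
      by (simp add: power_divide)
    then have "integrable M (\<lambda>\<omega>. (D h \<omega>)\<^sup>2)"
      unfolding D_def y_def[symmetric] using F_int G_int G_sq by (intro integrable_square_diff) auto
    moreover have "integrable M (D h)" and "expectation (D h) = - c"
      unfolding D_def y_def[symmetric] c_def using F_int G_int by auto
    ultimately show ?case
      using square_expectation_le[of "D h"] by simp
  qed
  then have "c\<^sup>2 \<le> 0"
    by (intro tendsto_le[OF _ lim tendsto_const]) auto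
  then show ?thesis
    by (simp add: c_def)
qed

lemma (in prob_space) nn_integral_square_affine_centred:
  fixes X :: "'a \<Rightarrow> real"
  assumes "integrable M X" "integrable M (\<lambda>\<omega>. (X \<omega>)\<^sup>2)" "expectation X = 0"
  shows "(\<integral>\<^sup>+\<omega>. ennreal ((p + lam * X \<omega>)\<^sup>2) \<partial>M)
       = ennreal (p\<^sup>2) + ennreal (lam\<^sup>2 * expectation (\<lambda>\<omega>. (X \<omega>)\<^sup>2))"
proof -
  have expand: "(p + lam * X \<omega>)\<^sup>2 = p\<^sup>2 + 2 * p * lam * X \<omega> + lam\<^sup>2 * (X \<omega>)\<^sup>2" for \<omega>
    by (simp add: power2_sum power_mult_distrib)
  have "integrable M (\<lambda>\<omega>. (p + lam * X \<omega>)\<^sup>2)"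
    unfolding expand using assms by auto
  then have "(\<integral>\<^sup>+\<omega>. ennreal ((p + lam * X \<omega>)\<^sup>2) \<partial>M) = ennreal (expectation (\<lambda>\<omega>. (p + lam * X \<omega>)\<^sup>2))"
    by (intro nn_integral_eq_integral) auto
  also have "expectation (\<lambda>\<omega>. (p + lam * X \<omega>)\<^sup>2) = p\<^sup>2 + lam\<^sup>2 * expectation (\<lambda>\<omega>. (X \<omega>)\<^sup>2)"
    using assms by (simp add: expand prob_space)
  finally show ?thesis
    by (simp add: ennreal_plus integral_nonneg_AE)
qed

lemma (in prob_space) nn_integral_norm_square_affine_centred:
  fixes V :: "'a \<Rightarrow> 'b::euclidean_space"
  assumes "\<And>i. i \<in> Basis \<Longrightarrow> integrable M (\<lambda>\<omega>. V \<omega> \<bullet> i)"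
    and "\<And>i. i \<in> Basis \<Longrightarrow> integrable M (\<lambda>\<omega>. (V \<omega> \<bullet> i)\<^sup>2)"
    and "\<And>i. i \<in> Basis \<Longrightarrow> expectation (\<lambda>\<omega>. V \<omega> \<bullet> i) = 0"
  shows "(\<integral>\<^sup>+\<omega>. ennreal ((norm (g + lam *\<^sub>R V \<omega>))\<^sup>2) \<partial>M)
       = ennreal ((norm g)\<^sup>2) + ennreal (lam\<^sup>2 * (\<Sum>i\<in>Basis. expectation (\<lambda>\<omega>. (V \<omega> \<bullet> i)\<^sup>2)))"
proof -
  have norm_sq: "(norm v)\<^sup>2 = (\<Sum>i\<in>Basis. (v \<bullet> i)\<^sup>2)" for v :: 'b
    unfolding power2_norm_eq_inner by (subst euclidean_inner) (simp add: power2_eq_square)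
  have "(\<integral>\<^sup>+\<omega>. ennreal ((norm (g + lam *\<^sub>R V \<omega>))\<^sup>2) \<partial>M)
      = (\<integral>\<^sup>+\<omega>. (\<Sum>i\<in>Basis. ennreal ((g \<bullet> i + lam * (V \<omega> \<bullet> i))\<^sup>2)) \<partial>M)"
    by (intro nn_integral_cong) (simp add: norm_sq inner_add_left sum_ennreal)
  also have "\<dots> = (\<Sum>i\<in>Basis. \<integral>\<^sup>+\<omega>. ennreal ((g \<bullet> i + lam * (V \<omega> \<bullet> i))\<^sup>2) \<partial>M)"
    using assms(1) by (intro nn_integral_sum) (auto dest: borel_measurable_integrable)
  also have "\<dots> = (\<Sum>i\<in>Basis. ennreal ((g \<bullet> i)\<^sup>2) + ennreal (lam\<^sup>2 * expectation (\<lambda>\<omega>. (V \<omega> \<bullet> i)\<^sup>2)))"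
    using assms by (intro sum.cong refl nn_integral_square_affine_centred) auto
  also have "\<dots> = ennreal ((norm g)\<^sup>2) + ennreal (lam\<^sup>2 * (\<Sum>i\<in>Basis. expectation (\<lambda>\<omega>. (V \<omega> \<bullet> i)\<^sup>2)))"
    by (simp add: sum.distrib norm_sq sum_ennreal sum_distrib_left integral_nonneg_AE)
  finally show ?thesis .
qed

lemma (in prob_space) ms_gradient_nn_integral_norm_square_affine:
  fixes F :: "'a \<Rightarrow> 'b::euclidean_space \<Rightarrow> real" and G :: "'a \<Rightarrow> 'b \<Rightarrow> 'b"
  assumes "open S" "x \<in> S"
    and G_meas: "random_variable borel (\<lambda>\<omega>. G \<omega> x)"
    and msd: "ms_gradient M S F G"
    and centred: "\<And>y. y \<in> S \<Longrightarrow> integrable M (\<lambda>\<omega>. F \<omega> y) \<and> expectation (\<lambda>\<omega>. F \<omega> y) = 0"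
    and isotropic: "\<And>i. i \<in> Basis \<Longrightarrow> expectation (\<lambda>\<omega>. (G \<omega> x \<bullet> i) * (G \<omega> x \<bullet> i)) = \<beta> / DIM('b)"
  shows "(\<integral>\<^sup>+\<omega>. ennreal ((norm (g + lam *\<^sub>R G \<omega> x))\<^sup>2) \<partial>M)
       = ennreal ((norm g)\<^sup>2) + ennreal (lam\<^sup>2 * \<beta>)"
proof -
  have "(\<integral>\<^sup>+\<omega>. ennreal ((norm (g + lam *\<^sub>R G \<omega> x))\<^sup>2) \<partial>M)
      = ennreal ((norm g)\<^sup>2) + ennreal (lam\<^sup>2 * (\<Sum>i\<in>Basis. expectation (\<lambda>\<omega>. (G \<omega> x \<bullet> i)\<^sup>2)))"
    using ms_gradient_integrable[OF msd \<open>x \<in> S\<close> _ G_meas]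
      ms_gradient_expectation_zero[OF assms(1,2) _ G_meas msd centred]
    by (intro nn_integral_norm_square_affine_centred)
  also have "(\<Sum>i\<in>Basis. expectation (\<lambda>\<omega>. (G \<omega> x \<bullet> i)\<^sup>2)) = \<beta>"
    using isotropic by (simp add: power2_eq_square)
  finally show ?thesis .
qed

lemma nn_integral_set_nn_integral_shift:
  fixes f :: "'w \<Rightarrow> 'b \<Rightarrow> ennreal"
  assumes "sigma_finite_measure M" "sigma_finite_measure N" and A: "A \<in> sets N"
    and f_meas: "(\<lambda>(\<omega>, x). f \<omega> x) \<in> borel_measurable (M \<Otimes>\<^sub>M restrict_space N A)"
    and u_meas: "u \<in> borel_measurable (restrict_space N A)"
    and pointwise: "\<And>x. x \<in> A \<Longrightarrow> (\<integral>\<^sup>+\<omega>. f \<omega> x \<partial>M) = u x + c"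
  shows "(\<integral>\<^sup>+\<omega>. (\<integral>\<^sup>+x\<in>A. f \<omega> x \<partial>N) \<partial>M) = (\<integral>\<^sup>+x\<in>A. u x \<partial>N) + c * emeasure N A"
proof -
  let ?NA = "restrict_space N A"
  interpret pair_sigma_finite M ?NA
    using assms by (simp add: pair_sigma_finite_def sigma_finite_measure_restrict_space)
  have A': "A \<inter> space N \<in> sets N" using A by simp
  have "(\<integral>\<^sup>+\<omega>. (\<integral>\<^sup>+x\<in>A. f \<omega> x \<partial>N) \<partial>M) = (\<integral>\<^sup>+\<omega>. (\<integral>\<^sup>+x. f \<omega> x \<partial>?NA) \<partial>M)"
    by (simp add: nn_integral_restrict_space[OF A'])
  also have "\<dots> = (\<integral>\<^sup>+x. (\<integral>\<^sup>+\<omega>. f \<omega> x \<partial>M) \<partial>?NA)"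
    using Fubini'[OF f_meas] by simp
  also have "\<dots> = (\<integral>\<^sup>+x. u x + c \<partial>?NA)"
    by (intro nn_integral_cong) (simp add: space_restrict_space pointwise)
  also have "\<dots> = (\<integral>\<^sup>+x. u x \<partial>?NA) + c * emeasure ?NA (space ?NA)"
    using u_meas by (simp add: nn_integral_add)
  also have "\<dots> = (\<integral>\<^sup>+x\<in>A. u x \<partial>N) + c * emeasure N A"
    using A by (simp add: nn_integral_restrict_space[OF A'] emeasure_restrict_space space_restrict_space Int_absorb1 sets.sets_into_space)
  finally show ?thesis .
qed

lemma measurable_pair_restrict_space2:
  assumes "f \<in> measurable (M \<Otimes>\<^sub>M N) K"
  shows "f \<in> measurable (M \<Otimes>\<^sub>M restrict_space N A) K"
proof -
  have "(\<lambda>z. (fst z, snd z)) \<in> measurable (M \<Otimes>\<^sub>M restrict_space N A) (M \<Otimes>\<^sub>M N)"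
    using measurable_restrict_space1[OF measurable_ident_sets[OF refl], of N A]
    by (intro measurable_Pair measurable_compose[OF measurable_snd]) auto
  from measurable_compose[OF this assms] show ?thesis
    by simp
qed

lemma borel_measurable_continuous_on_restrict_lborel:
  "continuous_on A f \<Longrightarrow> f \<in> borel_measurable (restrict_space lborel A)"
  using borel_measurable_continuous_on_restrict[of A f]
  by (simp add: measurable_cong_sets[OF sets_restrict_space_cong[OF sets_lborel] refl])

lemma (in prob_space) nn_integral_set_square_affine_field:
  fixes F :: "'a \<Rightarrow> 'b::euclidean_space \<Rightarrow> real" and p :: "'b \<Rightarrow> real"
  assumes A: "A \<in> sets lborel" and p_cont: "continuous_on A p"
    and F_meas: "(\<lambda>z. F (fst z) (snd z)) \<in> borel_measurable (M \<Otimes>\<^sub>M lborel)"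
    and moments: "\<And>x. x \<in> A \<Longrightarrow> integrable M (\<lambda>\<omega>. F \<omega> x) \<and> expectation (\<lambda>\<omega>. F \<omega> x) = 0
        \<and> integrable M (\<lambda>\<omega>. (F \<omega> x)\<^sup>2) \<and> expectation (\<lambda>\<omega>. F \<omega> x * F \<omega> x) = \<alpha>"
  shows "(\<integral>\<^sup>+\<omega>. (\<integral>\<^sup>+x\<in>A. ennreal ((p x + lam * F \<omega> x)\<^sup>2) \<partial>lborel) \<partial>M)
       = (\<integral>\<^sup>+x\<in>A. ennreal ((p x)\<^sup>2) \<partial>lborel) + ennreal (lam\<^sup>2 * \<alpha>) * emeasure lborel A"
proof (rule nn_integral_set_nn_integral_shift[OF prob_space_imp_sigma_finite[OF prob_space_axioms]
      lborel.sigma_finite_measure_axioms A])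
  have [measurable]: "p \<in> borel_measurable (restrict_space lborel A)"
    "(\<lambda>z. F (fst z) (snd z)) \<in> borel_measurable (M \<Otimes>\<^sub>M restrict_space lborel A)"
    using p_cont F_meas
    by (simp_all add: borel_measurable_continuous_on_restrict_lborel measurable_pair_restrict_space2)
  show "(\<lambda>(\<omega>, x). ennreal ((p x + lam * F \<omega> x)\<^sup>2)) \<in> borel_measurable (M \<Otimes>\<^sub>M restrict_space lborel A)"
    "(\<lambda>x. ennreal ((p x)\<^sup>2)) \<in> borel_measurable (restrict_space lborel A)"
    by measurable
  show "(\<integral>\<^sup>+\<omega>. ennreal ((p x + lam * F \<omega> x)\<^sup>2) \<partial>M) = ennreal ((p x)\<^sup>2) + ennreal (lam\<^sup>2 * \<alpha>)"
    if "x \<in> A" for x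
    using moments[OF that] nn_integral_square_affine_centred[of "\<lambda>\<omega>. F \<omega> x" "p x" lam]
    by (simp add: power2_eq_square)
qed

lemma (in prob_space) nn_integral_set_norm_square_affine_ms_gradient:
  fixes F :: "'a \<Rightarrow> 'b::euclidean_space \<Rightarrow> real" and G :: "'a \<Rightarrow> 'b \<Rightarrow> 'b"
  assumes B: "B \<in> sets lborel" "B \<subseteq> S" "open S" and g_cont: "continuous_on B g"
    and G_meas: "(\<lambda>z. G (fst z) (snd z)) \<in> borel_measurable (M \<Otimes>\<^sub>M lborel)"
    and msd: "ms_gradient M S F G"
    and centred: "\<And>y. y \<in> S \<Longrightarrow> integrable M (\<lambda>\<omega>. F \<omega> y) \<and> expectation (\<lambda>\<omega>. F \<omega> y) = 0"
    and isotropic: "\<And>x i. x \<in> S \<Longrightarrow> i \<in> Basis \<Longrightarrow>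
        expectation (\<lambda>\<omega>. (G \<omega> x \<bullet> i) * (G \<omega> x \<bullet> i)) = \<beta> / DIM('b)"
  shows "(\<integral>\<^sup>+\<omega>. (\<integral>\<^sup>+x\<in>B. ennreal ((norm (g x + lam *\<^sub>R G \<omega> x))\<^sup>2) \<partial>lborel) \<partial>M)
       = (\<integral>\<^sup>+x\<in>B. ennreal ((norm (g x))\<^sup>2) \<partial>lborel) + ennreal (lam\<^sup>2 * \<beta>) * emeasure lborel B"
proof (rule nn_integral_set_nn_integral_shift[OF prob_space_imp_sigma_finite[OF prob_space_axioms]
      lborel.sigma_finite_measure_axioms B(1)])
  have [measurable]: "g \<in> borel_measurable (restrict_space lborel B)"
    "(\<lambda>z. G (fst z) (snd z)) \<in> borel_measurable (M \<Otimes>\<^sub>M restrict_space lborel B)"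
    using g_cont G_meas
    by (simp_all add: borel_measurable_continuous_on_restrict_lborel measurable_pair_restrict_space2)
  show "(\<lambda>(\<omega>, x). ennreal ((norm (g x + lam *\<^sub>R G \<omega> x))\<^sup>2)) \<in> borel_measurable (M \<Otimes>\<^sub>M restrict_space lborel B)"
    "(\<lambda>x. ennreal ((norm (g x))\<^sup>2)) \<in> borel_measurable (restrict_space lborel B)"
    by measurable
  show "(\<integral>\<^sup>+\<omega>. ennreal ((norm (g x + lam *\<^sub>R G \<omega> x))\<^sup>2) \<partial>M) = ennreal ((norm (g x))\<^sup>2) + ennreal (lam\<^sup>2 * \<beta>)"
    if "x \<in> B" for x
    using \<open>B \<subseteq> S\<close> that measurable_compose[OF measurable_Pair2'[of x lborel M] G_meas]
    by (intro ms_gradient_nn_integral_norm_square_affine[OF \<open>open S\<close> _ _ msd centred isotropic]) auto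
qed

lemma measure_ratio_imp_ennreal_le:
  fixes R \<alpha> \<beta> c :: real
  assumes "R > 0" "\<alpha> > 0" "c \<ge> 0"
    and fin: "emeasure N A < \<infinity>" "emeasure N B < \<infinity>" and "measure N B > 0"
    and ratio: "R\<^sup>2 / 4 * (\<beta> / \<alpha>) \<le> measure N A / measure N B"
  shows "ennreal (c * \<beta>) * emeasure N B \<le> ennreal (4 / R\<^sup>2) * (ennreal (c * \<alpha>) * emeasure N A)"
proof (cases "\<beta> \<ge> 0")
  case True
  have "\<beta> * measure N B \<le> 4 / R\<^sup>2 * (\<alpha> * measure N A)"
    using ratio assms by (simp add: field_simps)
  then have "c * (\<beta> * measure N B) \<le> c * (4 / R\<^sup>2 * (\<alpha> * measure N A))"
    using \<open>c \<ge> 0\<close> by (rule mult_left_mono)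
  then have "c * \<beta> * measure N B \<le> 4 / R\<^sup>2 * (c * \<alpha> * measure N A)"
    by (simp add: mult_ac)
  then show ?thesis
    using fin assms True by (simp add: emeasure_eq_ennreal_measure ennreal_mult'[symmetric] ennreal_leI)
next
  case False
  then have "ennreal (c * \<beta>) = 0"
    using \<open>c \<ge> 0\<close> by (intro ennreal_neg mult_nonneg_nonpos) auto
  then show ?thesis
    by simp
qed

lemma harmonic_on_imp_continuous_on:
  assumes "harmonic_on S f"
  shows "continuous_on S f" "continuous_on S (grad f)"
  using assms unfolding harmonic_on_def
  by (auto intro!: continuous_at_imp_continuous_on differentiable_imp_continuous_within)

theorem lemma3p15:
  fixes M :: "'w measure" and F :: "'w \<Rightarrow> 'a::euclidean_space \<Rightarrow> real"
    and G :: "'w \<Rightarrow> 'a \<Rightarrow> 'a" and \<psi> :: "'a \<Rightarrow> real"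
    and R \<alpha> \<beta> lam :: real
  assumes "prob_space M"
    and "R > 0" and "\<alpha> > 0" and "lam > 0"
    and harm: "harmonic_on (ball 0 (2*R)) \<psi>"
    and cacc: "(\<integral>\<^sup>+x\<in>ball 0 R. ennreal ((norm (grad \<psi> x))\<^sup>2) \<partial>lborel)
               \<le> ennreal (4 / R\<^sup>2) * (\<integral>\<^sup>+x\<in>ball 0 (2*R) - ball 0 R. ennreal ((\<psi> x)\<^sup>2) \<partial>lborel)"
    and meas_F: "(\<lambda>(\<omega>, x). F \<omega> x) \<in> borel_measurable (M \<Otimes>\<^sub>M lborel)"
    and meas_G: "(\<lambda>(\<omega>, x). G \<omega> x) \<in> borel_measurable (M \<Otimes>\<^sub>M lborel)"
    and gauss: "gaussian_field M (ball 0 (2*R)) F"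
    and msd: "ms_gradient M (ball 0 (2*R)) F G"
    and mean0: "\<forall>x\<in>ball 0 (2*R). integrable M (\<lambda>\<omega>. F \<omega> x) \<and> (\<integral>\<omega>. F \<omega> x \<partial>M) = 0"
    and var: "\<forall>x\<in>ball 0 (2*R). (\<integral>\<omega>. F \<omega> x * F \<omega> x \<partial>M) = \<alpha>"
    and gcov: "\<forall>x\<in>ball 0 (2*R). \<forall>i\<in>Basis. \<forall>j\<in>Basis.
                 (\<integral>\<omega>. (G \<omega> x \<bullet> i) * (G \<omega> x \<bullet> j) \<partial>M) = (if i = j then \<beta> / real DIM('a) else 0)"
    and cond: "R\<^sup>2 / 4 * (\<beta> / \<alpha>)
               \<le> measure lborel (ball (0::'a) (2*R) - ball 0 R) / measure lborel (ball (0::'a) R)"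
  shows "(\<integral>\<^sup>+\<omega>. (\<integral>\<^sup>+x\<in>ball 0 R. ennreal ((norm (grad \<psi> x + lam *\<^sub>R G \<omega> x))\<^sup>2) \<partial>lborel) \<partial>M)
         \<le> ennreal (4 / R\<^sup>2) *
           (\<integral>\<^sup>+\<omega>. (\<integral>\<^sup>+x\<in>ball 0 (2*R) - ball 0 R. ennreal ((\<psi> x + lam * F \<omega> x)\<^sup>2) \<partial>lborel) \<partial>M)"
proof -
  interpret prob_space M by fact
  define S where "S = ball (0::'a) (2*R)"
  define B where "B = ball (0::'a) R"
  define A where "A = ball (0::'a) (2*R) - ball 0 R"
  have "B \<subseteq> S" "A \<subseteq> S" "A \<in> sets lborel" "B \<in> sets lborel"
    using \<open>R > 0\<close> by (auto simp: S_def B_def A_def)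
  have \<psi>_cont: "continuous_on A \<psi>" "continuous_on B (grad \<psi>)"
    using harmonic_on_imp_continuous_on[OF harm] \<open>A \<subseteq> S\<close> \<open>B \<subseteq> S\<close>
    by (auto simp: S_def intro: continuous_on_subset)
  have lhs: "(\<integral>\<^sup>+\<omega>. (\<integral>\<^sup>+x\<in>B. ennreal ((norm (grad \<psi> x + lam *\<^sub>R G \<omega> x))\<^sup>2) \<partial>lborel) \<partial>M)
      = (\<integral>\<^sup>+x\<in>B. ennreal ((norm (grad \<psi> x))\<^sup>2) \<partial>lborel) + ennreal (lam\<^sup>2 * \<beta>) * emeasure lborel B"
    using \<open>B \<in> sets lborel\<close> \<open>B \<subseteq> S\<close> \<psi>_cont(2) meas_G msd mean0 gcov
    by (intro nn_integral_set_norm_square_affine_ms_gradient[where S = S])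
       (auto simp: S_def case_prod_beta')
  have rhs: "(\<integral>\<^sup>+\<omega>. (\<integral>\<^sup>+x\<in>A. ennreal ((\<psi> x + lam * F \<omega> x)\<^sup>2) \<partial>lborel) \<partial>M)
      = (\<integral>\<^sup>+x\<in>A. ennreal ((\<psi> x)\<^sup>2) \<partial>lborel) + ennreal (lam\<^sup>2 * \<alpha>) * emeasure lborel A"
    using \<open>A \<in> sets lborel\<close> \<open>A \<subseteq> S\<close> \<psi>_cont(1) meas_F msd mean0 var
    by (intro nn_integral_set_square_affine_field) (auto simp: S_def case_prod_beta' ms_gradient_def)
  have "emeasure lborel A < \<infinity>" "emeasure lborel B < \<infinity>"
    unfolding A_def B_def by (intro emeasure_bounded_finite bounded_diff bounded_ball)+
  then have "ennreal (lam\<^sup>2 * \<beta>) * emeasure lborel B \<le> ennreal (4 / R\<^sup>2) * (ennreal (lam\<^sup>2 * \<alpha>) * emeasure lborel A)"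
    using cond \<open>R > 0\<close> \<open>\<alpha> > 0\<close>
    by (intro measure_ratio_imp_ennreal_le) (simp_all add: A_def B_def)
  then show ?thesis
    using cacc unfolding A_def[symmetric] unfolding B_def[symmetric] lhs rhs distrib_left
    by (intro add_mono)
qed

end
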